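(* Every valid non-entangling physical transformation of a system of $N$ elementary toy systems is a composition of local permutations (permutations of $\{1,2,3,4\}$ acting on a single elementary subsystem) and system swaps $S_{i,j}$, where $S_{i,j}(a_1,\dots,a_i,\dots,a_j,\dots,a_N) = (a_1,\dots,a_j,\dots,a_i,\dots,a_N)$.
   Context: In Spekkens' toy theory, ontic states of $N$ elementary systems are elements of $\{1,2,3,4\}^N$, and an epistemic state is a set of ontic states; only certain epistemic states are valid (those satisfying the knowledge balance principle globally and on all subsystems; equivalently, those equal to the set of ontic states fixed by some toy stabilizer group). A physical transformation is a map $T$ on ontic states, acting on epistemic states by $T(E)=\{T(o): o\in E\}$; it is valid if it maps valid epistemic states to valid epistemic states, and valid transformations are permutations of the ontic states. A product state with respect to a division of the systems into groups $A_1,\dots,A_k$ is a Cartesian product of valid epistemic states on the groups. A transformation is non-entangling if, for every division into groups $A_1,\dots,A_k$, it maps every product state with respect to that division to a product state with respect to the same division. *)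

theory Defs
  imports Main "HOL-Library.Disjoint_Sets"
begin

datatype ont = O1 | O2 | O3 | O4

text \<open>Ontic states of N elementary systems: lists of length N
  (position i is system i+1).\<close>
definition ostates :: "nat \<Rightarrow> ont list set" where
  "ostates N = {s. length s = N}"

text \<open>Single-system toy operators (Pusey's stabilizer notation):
  Z = (+1,+1,-1,-1), X = (+1,-1,+1,-1), Y = (+1,-1,-1,+1) on states 1,2,3,4.\<close>
datatype pauli = PI | PX | PY | PZ

fun pval :: "pauli \<Rightarrow> ont \<Rightarrow> int" where
  "pval PI _ = 1"
| "pval PZ O1 = 1" | "pval PZ O2 = 1" | "pval PZ O3 = -1" | "pval PZ O4 = -1"
| "pval PX O1 = 1" | "pval PX O2 = -1" | "pval PX O3 = 1" | "pval PX O4 = -1"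
| "pval PY O1 = 1" | "pval PY O2 = -1" | "pval PY O3 = -1" | "pval PY O4 = 1"

text \<open>Toy operator on N systems: a sign (True = minus) and a list of N Pauli labels.\<close>
type_synonym toyop = "bool \<times> pauli list"

definition toy_val :: "toyop \<Rightarrow> ont list \<Rightarrow> int" where
  "toy_val g s = (if fst g then -1 else 1) * (\<Prod>i<length (snd g). pval (snd g ! i) (s ! i))"

fun pmul :: "pauli \<Rightarrow> pauli \<Rightarrow> pauli" where
  "pmul PI p = p"
| "pmul p PI = p"
| "pmul PX PX = PI" | "pmul PY PY = PI" | "pmul PZ PZ = PI"
| "pmul PX PY = PZ" | "pmul PY PX = PZ"
| "pmul PY PZ = PX" | "pmul PZ PY = PX"
| "pmul PX PZ = PY" | "pmul PZ PX = PY"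

text \<open>Toy multiplication (agrees with pointwise multiplication of the value functions).\<close>
definition toy_mul :: "toyop \<Rightarrow> toyop \<Rightarrow> toyop" where
  "toy_mul g h = (fst g \<noteq> fst h, map2 pmul (snd g) (snd h))"

definition anticomm :: "pauli \<Rightarrow> pauli \<Rightarrow> bool" where
  "anticomm p q \<longleftrightarrow> p \<noteq> PI \<and> q \<noteq> PI \<and> p \<noteq> q"

definition toy_commute :: "toyop \<Rightarrow> toyop \<Rightarrow> bool" where
  "toy_commute g h \<longleftrightarrow>
     even (card {i. i < length (snd g) \<and> anticomm (snd g ! i) (snd h ! i)})"

definition minus_identity :: "nat \<Rightarrow> toyop" where
  "minus_identity N = (True, replicate N PI)"

definition toy_stabilizer_group :: "nat \<Rightarrow> toyop set \<Rightarrow> bool" where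
  "toy_stabilizer_group N G \<longleftrightarrow>
     G \<noteq> {} \<and>
     (\<forall>g\<in>G. length (snd g) = N) \<and>
     (\<forall>g\<in>G. \<forall>h\<in>G. toy_mul g h \<in> G) \<and>
     (\<forall>g\<in>G. \<forall>h\<in>G. toy_commute g h) \<and>
     minus_identity N \<notin> G"

definition valid_epi :: "nat \<Rightarrow> ont list set \<Rightarrow> bool" where
  "valid_epi N E \<longleftrightarrow>
     (\<exists>G. toy_stabilizer_group N G \<and> E = {s \<in> ostates N. \<forall>g\<in>G. toy_val g s = 1})"

definition valid_transformation :: "nat \<Rightarrow> (ont list \<Rightarrow> ont list) \<Rightarrow> bool" where
  "valid_transformation N T \<longleftrightarrow>
     T ` ostates N \<subseteq> ostates N \<and> (\<forall>E. valid_epi N E \<longrightarrow> valid_epi N (T ` E))"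

text \<open>Product state with respect to a division P of the systems {0..<N} into groups:
  Cartesian product of valid epistemic states on the groups (each group's systems
  listed in increasing order).\<close>
definition product_state :: "nat \<Rightarrow> nat set set \<Rightarrow> ont list set \<Rightarrow> bool" where
  "product_state N P E \<longleftrightarrow>
     (\<exists>Es. (\<forall>A\<in>P. valid_epi (card A) (Es A)) \<and>
           E = {s \<in> ostates N. \<forall>A\<in>P. nths s A \<in> Es A})"

definition non_entangling :: "nat \<Rightarrow> (ont list \<Rightarrow> ont list) \<Rightarrow> bool" where
  "non_entangling N T \<longleftrightarrow>
     (\<forall>P. partition_on {0..<N} P \<longrightarrow>
        (\<forall>E. product_state N P E \<longrightarrow> product_state N P (T ` E)))"

definition local_perm :: "nat \<Rightarrow> (ont \<Rightarrow> ont) \<Rightarrow> ont list \<Rightarrow> ont list" where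
  "local_perm i \<sigma> s = s[i := \<sigma> (s ! i)]"

definition sys_swap :: "nat \<Rightarrow> nat \<Rightarrow> ont list \<Rightarrow> ont list" where
  "sys_swap i j s = s[i := s ! j, j := s ! i]"

inductive_set local_swap_comps :: "nat \<Rightarrow> (ont list \<Rightarrow> ont list) set" for N where
  id: "id \<in> local_swap_comps N"
| loc: "\<lbrakk>f \<in> local_swap_comps N; i < N; bij \<sigma>\<rbrakk> \<Longrightarrow> local_perm i \<sigma> \<circ> f \<in> local_swap_comps N"
| swp: "\<lbrakk>f \<in> local_swap_comps N; i < N; j < N\<rbrakk> \<Longrightarrow> sys_swap i j \<circ> f \<in> local_swap_comps N"

end

theory Submission
  imports Defs "HOL-Combinatorics.Permutations"
begin

text \<open>
  They are the boxes
  \<open>S\<^sub>1 \<times> \<dots> \<times> S\<^sub>N\<close> of valid one-system states; these have at least two elements, and every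
  two-element set is one. A non-entangling \<open>T\<close> maps boxes to boxes, so counting shows that it is
  injective and hence permutes the finitely many boxes. Therefore it preserves the relation
  "\<open>u\<close> lies in every box containing \<open>s\<close> and \<open>t\<close>", i.e. "every coordinate of \<open>u\<close> agrees with
  that of \<open>s\<close> or of \<open>t\<close>", and this relation determines adjacency in the Hamming graph on
  \<open>{1,2,3,4}\<^sup>N\<close>. An automorphism of a Hamming graph sends the edges in direction \<open>i\<close> to edges
  in a direction \<open>\<pi> i\<close> independent of the edge (by a square argument), \<open>\<pi>\<close> is a permutation, and
  coordinate \<open>\<pi> i\<close> of the image depends only on coordinate \<open>i\<close> of the argument, through a
  permutation \<open>\<sigma>\<^sub>i\<close>. Such a map is a composition of system swaps and local permutations.
\<close>

section \<open>Valid states of one elementary system\<close>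

lemma all_ont: "(\<forall>x. P x) \<longleftrightarrow> P O1 \<and> P O2 \<and> P O3 \<and> P O4"
  by (metis ont.exhaust)

lemma ex_ont: "(\<exists>x. P x) \<longleftrightarrow> P O1 \<or> P O2 \<or> P O3 \<or> P O4"
  by (metis ont.exhaust)

lemma ex_pauli: "(\<exists>p. P p) \<longleftrightarrow> P PI \<or> P PX \<or> P PY \<or> P PZ"
  by (metis pauli.exhaust)

lemma finite_UNIV_ont: "finite (UNIV :: ont set)"
proof -
  have "(UNIV :: ont set) = {O1, O2, O3, O4}"
    by (auto intro: ont.exhaust)
  then show ?thesis
    by (metis finite.emptyI finite.insertI)
qed

lemma mem_ostates [simp]: "s \<in> ostates N \<longleftrightarrow> length s = N"
  by (simp add: ostates_def)

lemma toy_val_single [simp]: "toy_val (c, [p]) [x] = (if c then -1 else 1) * pval p x"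
  by (simp add: toy_val_def)

lemma toy_mul_single [simp]: "toy_mul (c, [p]) (d, [q]) = (c \<noteq> d, [pmul p q])"
  by (simp add: toy_mul_def)

lemma toy_commute_single [simp]: "toy_commute (c, [p]) (d, [q]) \<longleftrightarrow> \<not> anticomm p q"
proof -
  have "{i. i < length [p] \<and> anticomm ([p] ! i) ([q] ! i)} = (if anticomm p q then {0} else {})"
    by auto
  then show ?thesis
    by (simp add: toy_commute_def)
qed

definition valid_single :: "ont set \<Rightarrow> bool" where
  "valid_single S \<longleftrightarrow> valid_epi 1 ((\<lambda>x. [x]) ` S)"

lemma toy_stabilizer_group_single:
  assumes "p \<noteq> PI"
  shows "toy_stabilizer_group 1 {(False, [PI]), (c, [p])}"
proof -
  have "pmul p p = PI" "pmul p PI = p" "pmul PI p = p"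
    by (cases p; simp)+
  then show ?thesis
    using assms
    by (auto simp: toy_stabilizer_group_def anticomm_def minus_identity_def)
qed

lemma fixed_states_single_stabilizer:
  "{s \<in> ostates 1. \<forall>g\<in>{(False, [PI]), (c, [p])}. toy_val g s = 1}
     = (\<lambda>x. [x]) ` {x. toy_val (c, [p]) [x] = 1}"
  by (auto simp: length_Suc_conv)

lemma toy_eigenset_eq_pair:
  fixes a b :: ont
  assumes "a \<noteq> b"
  shows "\<exists>c p. p \<noteq> PI \<and> {x. toy_val (c, [p]) [x] = 1} = {a, b}"
  using assms by (cases a; cases b) (simp_all add: ex_pauli ex_bool_eq set_eq_iff all_ont)

lemma valid_single_card_2:
  assumes "card S = 2"
  shows "valid_single S"
proof -
  obtain a b where "a \<noteq> b" and S: "S = {a, b}"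
    using assms by (auto simp: card_2_iff)
  then obtain c p where "p \<noteq> PI" and eigen: "{x. toy_val (c, [p]) [x] = 1} = {a, b}"
    using toy_eigenset_eq_pair by blast
  have "(\<lambda>x. [x]) ` S = {s \<in> ostates 1. \<forall>g\<in>{(False, [PI]), (c, [p])}. toy_val g s = 1}"
    unfolding fixed_states_single_stabilizer eigen S ..
  then show ?thesis
    unfolding valid_single_def valid_epi_def
    using toy_stabilizer_group_single[OF \<open>p \<noteq> PI\<close>] by blast
qed

lemma toy_stabilizer_group_single_cases:
  assumes "toy_stabilizer_group 1 G"
  obtains c p where "(c, p) \<noteq> (True, PI)" and "G \<subseteq> {(False, [PI]), (c, [p])}"
proof -
  have shape: "\<exists>c p. g = (c, [p])" if "g \<in> G" for g
    using assms that by (cases g) (auto simp: toy_stabilizer_group_def length_Suc_conv)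
  have no_minus: "(True, [PI]) \<notin> G"
    using assms by (simp add: toy_stabilizer_group_def minus_identity_def)
  show ?thesis
  proof (cases "G \<subseteq> {(False, [PI])}")
    case True
    then show ?thesis
      using that by blast
  next
    case False
    then obtain c p where cp: "(c, [p]) \<in> G" "p \<noteq> PI"
      using shape no_minus by (metis (full_types) singletonI subsetI)
    have "h \<in> {(False, [PI]), (c, [p])}" if "h \<in> G" for h
    proof -
      obtain d q where h: "h = (d, [q])"
        using shape \<open>h \<in> G\<close> by blast
      have "toy_commute (c, [p]) h" and "toy_mul (c, [p]) h \<in> G"
        using assms cp(1) \<open>h \<in> G\<close> by (auto simp: toy_stabilizer_group_def)
      then show ?thesis
        using no_minus cp(2) h \<open>h \<in> G\<close>
        by (cases c; cases d; cases p; cases q) (auto simp: anticomm_def)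
    qed
    then show ?thesis
      using that cp(2) by blast
  qed
qed

lemma valid_single_two_le_card:
  assumes "valid_single S"
  shows "2 \<le> card S"
proof -
  obtain G where G: "toy_stabilizer_group 1 G"
    and S: "(\<lambda>x. [x]) ` S = {s \<in> ostates 1. \<forall>g\<in>G. toy_val g s = 1}"
    using assms unfolding valid_single_def valid_epi_def by blast
  obtain c p where "(c, p) \<noteq> (True, PI)" and G_sub: "G \<subseteq> {(False, [PI]), (c, [p])}"
    using toy_stabilizer_group_single_cases[OF G] by blast
  then have "\<exists>a b. a \<noteq> b \<and> toy_val (c, [p]) [a] = 1 \<and> toy_val (c, [p]) [b] = 1"
    by (cases c; cases p) (simp_all add: ex_ont)
  then obtain a b where "a \<noteq> b" "toy_val (c, [p]) [a] = 1" "toy_val (c, [p]) [b] = 1"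
    by blast
  then have "{a, b} \<subseteq> S"
    using S G_sub by (force simp: set_eq_iff)
  then have "card {a, b} \<le> card S"
    by (simp add: card_mono finite_subset[OF _ finite_UNIV_ont])
  then show ?thesis
    using \<open>a \<noteq> b\<close> by simp
qed

section \<open>Product states for the division into single systems\<close>

definition box :: "nat \<Rightarrow> (nat \<Rightarrow> 'a set) \<Rightarrow> 'a list set" where
  "box N S = {u. length u = N \<and> (\<forall>i<N. u ! i \<in> S i)}"

lemma card_box: "card (box N S) = (\<Prod>i<N. card (S i))"
proof (induction N arbitrary: S)
  case 0
  then show ?case
    by (simp add: box_def)
next
  case (Suc N)
  have box_Suc: "box (Suc N) S = (\<lambda>(x, u). x # u) ` (S 0 \<times> box N (\<lambda>i. S (Suc i)))"
  proof (rule set_eqI)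
    fix u
    show "u \<in> box (Suc N) S \<longleftrightarrow> u \<in> (\<lambda>(x, u). x # u) ` (S 0 \<times> box N (\<lambda>i. S (Suc i)))"
      by (cases u) (auto simp: box_def image_iff less_Suc_eq_0_disj)
  qed
  have "inj (\<lambda>(x :: 'a, u). x # u)"
    by (auto simp: inj_def)
  then show ?case
    unfolding box_Suc
    by (simp add: card_image inj_on_subset card_cartesian_product Suc.IH prod.lessThan_Suc_shift
        del: prod.lessThan_Suc)
qed

lemma finite_ont_lists: "finite {s :: ont list. length s = N}"
  using finite_lists_length_eq[OF finite_UNIV_ont, of N] by simp

lemma finite_box: "finite (box N (S :: nat \<Rightarrow> ont set))"
  using finite_ont_lists[of N] by (rule finite_subset[rotated]) (auto simp: box_def)

definition singleton_partition :: "nat \<Rightarrow> nat set set" where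
  "singleton_partition N = (\<lambda>i. {i}) ` {..<N}"

lemma partition_on_singleton_partition: "partition_on {0..<N} (singleton_partition N)"
  by (auto simp: partition_on_def singleton_partition_def disjoint_def)

lemma nths_singleton_set: "i < length s \<Longrightarrow> nths s {i} = [s ! i]"
proof (induction s arbitrary: i)
  case (Cons x s)
  then show ?case
    by (cases i) (simp_all add: nths_Cons)
qed simp

lemma product_state_singleton_partition_iff:
  "product_state N (singleton_partition N) E \<longleftrightarrow> (\<exists>S. (\<forall>i<N. valid_single (S i)) \<and> E = box N S)"
proof
  assume "product_state N (singleton_partition N) E"
  then obtain Es where valid: "\<forall>A\<in>singleton_partition N. valid_epi (card A) (Es A)"
    and E: "E = {s \<in> ostates N. \<forall>A\<in>singleton_partition N. nths s A \<in> Es A}"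
    unfolding product_state_def by blast
  define S where "S i = {x. [x] \<in> Es {i}}" for i
  have "(\<lambda>x. [x]) ` S i = Es {i}" if "i < N" for i
  proof -
    have "valid_epi 1 (Es {i})"
      using valid that by (auto simp: singleton_partition_def)
    then have "Es {i} \<subseteq> ostates 1"
      by (auto simp: valid_epi_def)
    then show ?thesis
      by (force simp: S_def length_Suc_conv)
  qed
  then have "\<forall>i<N. valid_single (S i)"
    using valid by (auto simp: valid_single_def singleton_partition_def)
  moreover have "E = box N S"
    by (auto simp: E box_def S_def singleton_partition_def nths_singleton_set)
  ultimately show "\<exists>S. (\<forall>i<N. valid_single (S i)) \<and> E = box N S"
    by blast
next
  assume "\<exists>S. (\<forall>i<N. valid_single (S i)) \<and> E = box N S"
  then obtain S where valid: "\<forall>i<N. valid_single (S i)" and E: "E = box N S"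
    by blast
  define Es where "Es A = (\<lambda>x. [x]) ` S (the_elem A)" for A
  have "\<forall>A\<in>singleton_partition N. valid_epi (card A) (Es A)"
    using valid by (auto simp: singleton_partition_def Es_def valid_single_def)
  moreover have "E = {s \<in> ostates N. \<forall>A\<in>singleton_partition N. nths s A \<in> Es A}"
    by (auto simp: E box_def Es_def singleton_partition_def nths_singleton_set)
  ultimately show "product_state N (singleton_partition N) E"
    unfolding product_state_def by blast
qed

lemma two_pow_le_card_product_state:
  assumes "product_state N (singleton_partition N) B"
  shows "2 ^ N \<le> card B"
proof -
  obtain S where "\<forall>i<N. valid_single (S i)" and B: "B = box N S"
    using assms product_state_singleton_partition_iff by blast
  then have "(\<Prod>i<N. 2) \<le> (\<Prod>i<N. card (S i))"
    by (intro prod_mono) (simp add: valid_single_two_le_card)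
  then show ?thesis
    by (simp add: B card_box)
qed

definition between :: "nat \<Rightarrow> 'a list \<Rightarrow> 'a list \<Rightarrow> 'a list \<Rightarrow> bool" where
  "between N s t u \<longleftrightarrow> (\<forall>i<N. u ! i = s ! i \<or> u ! i = t ! i)"

lemma card_2_set_through:
  fixes a b c :: ont
  shows "\<exists>A. card A = 2 \<and> a \<in> A \<and> b \<in> A \<and> (c \<in> A \<longrightarrow> c = a \<or> c = b)"
proof (cases "a = b")
  case True
  obtain d where "d \<noteq> a" "d \<noteq> c"
    using ex_ont[of "\<lambda>d. d \<noteq> a \<and> d \<noteq> c"] by (cases a; cases c) auto
  then show ?thesis
    using True by (intro exI[of _ "{a, d}"]) auto
next
  case False
  then show ?thesis
    by (intro exI[of _ "{a, b}"]) auto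
qed

lemma card_2_box_through:
  fixes s t u :: "ont list"
  assumes "length s = N" "length t = N"
  obtains S where "\<forall>i<N. card (S i) = 2" "s \<in> box N S" "t \<in> box N S"
    and "u \<in> box N S \<Longrightarrow> between N s t u"
proof -
  have "\<forall>i. \<exists>A. card A = 2 \<and> s ! i \<in> A \<and> t ! i \<in> A \<and> (u ! i \<in> A \<longrightarrow> u ! i = s ! i \<or> u ! i = t ! i)"
    using card_2_set_through by blast
  then obtain S where "\<forall>i. card (S i) = 2 \<and> s ! i \<in> S i \<and> t ! i \<in> S i
      \<and> (u ! i \<in> S i \<longrightarrow> u ! i = s ! i \<or> u ! i = t ! i)"
    by (auto dest: choice)
  then show ?thesis
    using that assms by (auto simp: box_def between_def)
qed

lemma product_state_box_card_2:
  "\<forall>i<N. card (S i) = 2 \<Longrightarrow> product_state N (singleton_partition N) (box N S)"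
  by (auto simp: product_state_singleton_partition_iff valid_single_card_2 intro!: exI[of _ S])

lemma between_iff_product_states:
  fixes s t u :: "ont list"
  assumes "length s = N" "length t = N" "length u = N"
  shows "between N s t u \<longleftrightarrow>
    (\<forall>B. product_state N (singleton_partition N) B \<longrightarrow> s \<in> B \<longrightarrow> t \<in> B \<longrightarrow> u \<in> B)"
proof
  assume "between N s t u"
  then show "\<forall>B. product_state N (singleton_partition N) B \<longrightarrow> s \<in> B \<longrightarrow> t \<in> B \<longrightarrow> u \<in> B"
    using assms(3)
    by (force simp: product_state_singleton_partition_iff box_def between_def)
next
  assume "\<forall>B. product_state N (singleton_partition N) B \<longrightarrow> s \<in> B \<longrightarrow> t \<in> B \<longrightarrow> u \<in> B"
  then show "between N s t u"
    using card_2_box_through[OF assms(1,2)] product_state_box_card_2 by metis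
qed

section \<open>Automorphisms of Hamming graphs\<close>

definition differ_at :: "nat \<Rightarrow> 'a list \<Rightarrow> 'a list \<Rightarrow> nat \<Rightarrow> bool" where
  "differ_at N s t j \<longleftrightarrow> j < N \<and> s ! j \<noteq> t ! j \<and> (\<forall>i<N. i \<noteq> j \<longrightarrow> s ! i = t ! i)"

definition hamming_adj :: "nat \<Rightarrow> 'a list \<Rightarrow> 'a list \<Rightarrow> bool" where
  "hamming_adj N s t \<longleftrightarrow> (\<exists>j. differ_at N s t j)"

lemma differ_atD:
  assumes "differ_at N s t j"
  shows "j < N" "s ! j \<noteq> t ! j" "i < N \<Longrightarrow> i \<noteq> j \<Longrightarrow> s ! i = t ! i"
  using assms by (simp_all add: differ_at_def)

lemma differ_at_update: "length s = N \<Longrightarrow> i < N \<Longrightarrow> x \<noteq> s ! i \<Longrightarrow> differ_at N s (s[i := x]) i"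
  by (simp add: differ_at_def)

lemma differ_at_sym: "differ_at N s t j \<Longrightarrow> differ_at N t s j"
  unfolding differ_at_def by metis

lemma differ_at_unique: "differ_at N s t j \<Longrightarrow> i < N \<Longrightarrow> s ! i \<noteq> t ! i \<Longrightarrow> i = j"
  unfolding differ_at_def by blast

lemma differ_at_common:
  assumes "differ_at N z a j" "differ_at N z b j" "a \<noteq> b" "length a = N" "length b = N"
  shows "differ_at N a b j"
proof -
  have "\<forall>i<N. i \<noteq> j \<longrightarrow> a ! i = b ! i"
    using assms(1,2) unfolding differ_at_def by metis
  moreover from this have "a ! j \<noteq> b ! j"
    using assms(3-5) by (metis nth_equalityI)
  ultimately show ?thesis
    using assms(1) unfolding differ_at_def by blast
qed

lemma not_hamming_adj_updates:
  assumes "length s = N" "i < N" "k < N" "i \<noteq> k" "x \<noteq> s ! i" "y \<noteq> s ! k"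
  shows "\<not> hamming_adj N (s[i := x]) (s[k := y])"
proof
  assume "hamming_adj N (s[i := x]) (s[k := y])"
  then obtain j where j: "differ_at N (s[i := x]) (s[k := y]) j"
    unfolding hamming_adj_def by blast
  have "i = j" "k = j"
    using differ_at_unique[OF j, of i] differ_at_unique[OF j, of k] assms by auto
  then show False
    using \<open>i \<noteq> k\<close> by simp
qed

lemma hamming_adj_iff_between:
  assumes s: "length s = N" and t: "length t = N"
  shows "hamming_adj N s t \<longleftrightarrow> s \<noteq> t \<and> (\<forall>u. length u = N \<longrightarrow> between N s t u \<longrightarrow> u = s \<or> u = t)"
proof
  assume "hamming_adj N s t"
  then obtain j where j: "differ_at N s t j"
    unfolding hamming_adj_def by blast
  have "u = s \<or> u = t" if "length u = N" "between N s t u" for u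
  proof (cases "u ! j = s ! j")
    case True
    then have "\<forall>i<N. u ! i = s ! i"
      using j that(2) unfolding differ_at_def between_def by metis
    then show ?thesis
      using that(1) s by (simp add: nth_equalityI)
  next
    case False
    then have "\<forall>i<N. u ! i = t ! i"
      using j that(2) unfolding differ_at_def between_def by metis
    then show ?thesis
      using that(1) t by (simp add: nth_equalityI)
  qed
  moreover have "s \<noteq> t"
    using j unfolding differ_at_def by auto
  ultimately show "s \<noteq> t \<and> (\<forall>u. length u = N \<longrightarrow> between N s t u \<longrightarrow> u = s \<or> u = t)"
    by blast
next
  assume adj: "s \<noteq> t \<and> (\<forall>u. length u = N \<longrightarrow> between N s t u \<longrightarrow> u = s \<or> u = t)"
  then obtain j where j: "j < N" "s ! j \<noteq> t ! j"
    using s t by (metis nth_equalityI)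
  have "s ! i = t ! i" if "i < N" "i \<noteq> j" for i
  proof (rule ccontr)
    assume "s ! i \<noteq> t ! i"
    then have "s[j := t ! j] \<noteq> s" "s[j := t ! j] \<noteq> t"
      using j that s by (metis nth_list_update_eq, metis nth_list_update_neq)
    moreover have "between N s t (s[j := t ! j])"
      using s j(1) by (auto simp: between_def nth_list_update)
    ultimately show False
      using adj s by (metis length_list_update)
  qed
  then show "hamming_adj N s t"
    unfolding hamming_adj_def differ_at_def using j by blast
qed

lemma coordinatewise_induct:
  assumes "length s = N" "length t = N" "P s"
    and step: "\<And>u k. length u = N \<Longrightarrow> k < N \<Longrightarrow> P u \<Longrightarrow> P (u[k := t ! k])"
  shows "P t"
proof -
  have "\<exists>u. length u = N \<and> P u \<and> (\<forall>i<m. u ! i = t ! i)" if "m \<le> N" for m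
    using that
  proof (induction m)
    case 0
    then show ?case
      using assms by auto
  next
    case (Suc m)
    then obtain u where u: "length u = N" "P u" "\<forall>i<m. u ! i = t ! i"
      by auto
    then have "P (u[m := t ! m])" and "\<forall>i<Suc m. u[m := t ! m] ! i = t ! i"
      using step Suc.prems by (auto simp: nth_list_update less_Suc_eq)
    then show ?case
      using u(1) by (intro exI[of _ "u[m := t ! m]"]) simp
  qed
  then obtain u where "length u = N" "P u" "\<forall>i<N. u ! i = t ! i"
    by blast
  then show ?thesis
    using assms(2) by (metis nth_equalityI)
qed

locale hamming_automorphism =
  fixes N :: nat and T :: "'a list \<Rightarrow> 'a list"
  assumes length_image: "length s = N \<Longrightarrow> length (T s) = N"
    and inj_on_lists: "inj_on T {s. length s = N}"
    and hamming_adj_image_iff: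
      "length s = N \<Longrightarrow> length t = N \<Longrightarrow> hamming_adj N (T s) (T t) \<longleftrightarrow> hamming_adj N s t"
    and two_symbols: "\<exists>a b :: 'a. a \<noteq> b"
begin

lemma ex_other_symbol: "\<exists>x :: 'a. x \<noteq> c"
  using two_symbols by metis

lemma image_eq_iff: "length s = N \<Longrightarrow> length t = N \<Longrightarrow> T s = T t \<longleftrightarrow> s = t"
  using inj_on_lists by (auto dest: inj_onD)

lemma ex_differ_at_image_update:
  assumes "length s = N" "i < N" "x \<noteq> s ! i"
  shows "\<exists>j. differ_at N (T s) (T (s[i := x])) j"
  using differ_at_update[OF assms] hamming_adj_image_iff[of s "s[i := x]"] assms(1)
  by (auto simp: hamming_adj_def)

lemma differ_at_image_update_symbol:
  assumes s: "length s = N" and i: "i < N" and x: "x \<noteq> s ! i" and y: "y \<noteq> s ! i"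
    and j: "differ_at N (T s) (T (s[i := x])) j"
  shows "differ_at N (T s) (T (s[i := y])) j"
proof (cases "x = y")
  case True
  then show ?thesis
    using j by simp
next
  case False
  obtain j' where j': "differ_at N (T s) (T (s[i := y])) j'"
    using ex_differ_at_image_update[OF s i y] by blast
  have "differ_at N (s[i := x]) (s[i := x, i := y]) i"
    using differ_at_update[of "s[i := x]" N i y] s i False by simp
  then have "hamming_adj N (s[i := x]) (s[i := y])"
    by (auto simp: hamming_adj_def)
  then have "hamming_adj N (T (s[i := x])) (T (s[i := y]))"
    using hamming_adj_image_iff s by simp
  then obtain p where p: "differ_at N (T (s[i := x])) (T (s[i := y])) p"
    unfolding hamming_adj_def by blast
  have "j = j'"
  proof (rule ccontr)
    assume "j \<noteq> j'"
    then have "T (s[i := x]) ! j \<noteq> T (s[i := y]) ! j" "T (s[i := x]) ! j' \<noteq> T (s[i := y]) ! j'"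
      using differ_atD[OF j] differ_atD[OF j'] by metis+
    then show False
      using differ_at_unique[OF p] differ_atD(1)[OF j] differ_atD(1)[OF j'] \<open>j \<noteq> j'\<close> by metis
  qed
  then show ?thesis
    using j' by simp
qed

lemma differ_at_image_updates_distinct:
  assumes s: "length s = N" and "i < N" "k < N" "i \<noteq> k" "x \<noteq> s ! i" "y \<noteq> s ! k"
    and j: "differ_at N (T s) (T (s[i := x])) j" and j': "differ_at N (T s) (T (s[k := y])) j'"
  shows "j \<noteq> j'"
proof
  assume "j = j'"
  have "s[i := x] ! i \<noteq> s[k := y] ! i"
    using assms(2-5) s by simp
  then have "s[i := x] \<noteq> s[k := y]"
    by metis
  then have "T (s[i := x]) \<noteq> T (s[k := y])"
    using image_eq_iff s by simp
  then have "differ_at N (T (s[i := x])) (T (s[k := y])) j"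
    using differ_at_common[OF j] j' \<open>j = j'\<close> length_image s by simp
  then have "hamming_adj N (T (s[i := x])) (T (s[k := y]))"
    unfolding hamming_adj_def by blast
  then have "hamming_adj N (s[i := x]) (s[k := y])"
    using hamming_adj_image_iff[of "s[i := x]" "s[k := y]"] s by simp
  with not_hamming_adj_updates[OF assms(1-6)] show False
    by contradiction
qed

definition moves :: "'a list \<Rightarrow> nat \<Rightarrow> nat \<Rightarrow> bool" where
  "moves s i j \<longleftrightarrow> (\<forall>x. x \<noteq> s ! i \<longrightarrow> differ_at N (T s) (T (s[i := x])) j)"

lemma moves_if_differ_at:
  "length s = N \<Longrightarrow> i < N \<Longrightarrow> x \<noteq> s ! i \<Longrightarrow> differ_at N (T s) (T (s[i := x])) j \<Longrightarrow> moves s i j"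
  unfolding moves_def using differ_at_image_update_symbol by blast

lemma moves_update_other:
  assumes s: "length s = N" and i: "i < N" and k: "k < N" and "k \<noteq> i" and y: "y \<noteq> s ! k"
    and moves: "moves s i j"
  shows "moves (s[k := y]) i j"
proof -
  obtain x where x: "x \<noteq> s ! i"
    using ex_other_symbol by blast
  text \<open>\<open>z, a, b, c\<close> are the images of the corners of a square; if the edge from \<open>b\<close> to \<open>c\<close>
    had a direction other than \<open>j\<close>, then \<open>c\<close> would coincide with \<open>z\<close>.\<close>
  define z a b c where "z = T s" and "a = T (s[i := x])" and "b = T (s[k := y])"
    and "c = T (s[k := y, i := x])"
  have lengths: "length z = N" "length a = N" "length b = N" "length c = N"
    using length_image s by (simp_all add: z_def a_def b_def c_def)
  have za: "differ_at N z a j"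
    using moves x by (simp add: moves_def z_def a_def)
  obtain j' where zb: "differ_at N z b j'"
    using ex_differ_at_image_update[OF s k y] by (auto simp: z_def b_def)
  have "j \<noteq> j'"
    using differ_at_image_updates_distinct[OF s i k] za zb \<open>k \<noteq> i\<close> x y
    by (simp add: z_def a_def b_def)
  obtain q where bc: "differ_at N b c q"
    using ex_differ_at_image_update[of "s[k := y]" i x] s i x \<open>k \<noteq> i\<close>
    by (auto simp: b_def c_def)
  obtain p where ac: "differ_at N a c p"
    using ex_differ_at_image_update[of "s[i := x]" k y] s k y \<open>k \<noteq> i\<close>
    by (auto simp: a_def c_def list_update_swap)
  have "s[k := y, i := x] \<noteq> s"
    using s i x by (metis length_list_update nth_list_update_eq)
  then have "c \<noteq> z"
    using image_eq_iff[of "s[k := y, i := x]" s] s by (simp add: c_def z_def)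
  have "q = j"
  proof (rule ccontr)
    assume "q \<noteq> j"
    then have "c ! j = z ! j"
      using differ_atD(3)[OF bc] differ_atD(3)[OF zb] differ_atD(1)[OF za] \<open>j \<noteq> j'\<close> by metis
    then have "p = j"
      using differ_at_unique[OF ac] differ_atD(1,2)[OF za] by metis
    then have "\<forall>l<N. c ! l = z ! l"
      using \<open>c ! j = z ! j\<close> differ_atD(3)[OF za] differ_atD(3)[OF ac] by metis
    then show False
      using \<open>c \<noteq> z\<close> lengths by (metis nth_equalityI)
  qed
  then show ?thesis
    using moves_if_differ_at[of "s[k := y]" i x] bc s i x \<open>k \<noteq> i\<close>
    by (simp add: b_def c_def)
qed

lemma moves_update:
  assumes s: "length s = N" and i: "i < N" and k: "k < N" and moves: "moves s i j"
  shows "moves (s[k := y]) i j"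
proof -
  consider "y = s ! k" | "k \<noteq> i" "y \<noteq> s ! k" | "k = i" "y \<noteq> s ! i"
    by blast
  then show ?thesis
  proof cases
    case 1
    then show ?thesis
      using moves by simp
  next
    case 2
    then show ?thesis
      using moves_update_other[OF s i k] moves by blast
  next
    case 3
    have "differ_at N (T s) (T (s[i := y])) j"
      using moves 3 by (simp add: moves_def)
    then have "differ_at N (T (s[i := y])) (T (s[i := y, i := s ! i])) j"
      by (simp add: differ_at_sym)
    then show ?thesis
      using moves_if_differ_at[of "s[i := y]" i "s ! i" j] s i 3 by simp
  qed
qed

lemma moves_transfer:
  assumes "length s = N" "length t = N" "i < N" "moves s i j"
  shows "moves t i j"
  using coordinatewise_induct[of s N t "\<lambda>u. moves u i j"] assms moves_update by blast

lemma ex_moves_everywhere: "i < N \<Longrightarrow> \<exists>j. \<forall>s. length s = N \<longrightarrow> moves s i j"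
proof -
  assume i: "i < N"
  obtain a b :: 'a where "a \<noteq> b"
    using two_symbols by blast
  then have b: "b \<noteq> replicate N a ! i"
    using i by simp
  then obtain j where "differ_at N (T (replicate N a)) (T ((replicate N a)[i := b])) j"
    using ex_differ_at_image_update[of "replicate N a" i b] i by auto
  then have "moves (replicate N a) i j"
    using moves_if_differ_at i b by simp
  then show ?thesis
    using moves_transfer[of "replicate N a"] i by auto
qed

definition coord_perm :: "nat \<Rightarrow> nat" where
  "coord_perm i = (if i < N then SOME j. \<forall>s. length s = N \<longrightarrow> moves s i j else i)"

lemma differ_at_coord_perm:
  assumes "length s = N" "i < N" "x \<noteq> s ! i"
  shows "differ_at N (T s) (T (s[i := x])) (coord_perm i)"
proof -
  have "\<forall>s. length s = N \<longrightarrow> moves s i (coord_perm i)"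
    unfolding coord_perm_def using someI_ex[OF ex_moves_everywhere] assms(2) by simp
  then show ?thesis
    using assms by (simp add: moves_def)
qed

lemma coord_perm_less: "i < N \<Longrightarrow> coord_perm i < N"
  using differ_at_coord_perm[of "replicate N _" i] ex_other_symbol differ_atD(1) by (metis length_replicate)

lemma inj_on_coord_perm: "inj_on coord_perm {..<N}"
proof (rule inj_onI, rule ccontr)
  fix i k
  assume "i \<in> {..<N}" "k \<in> {..<N}" "coord_perm i = coord_perm k" "i \<noteq> k"
  moreover obtain a b :: 'a where "a \<noteq> b"
    using two_symbols by blast
  ultimately show False
    using differ_at_image_updates_distinct[of "replicate N a" i k b b]
      differ_at_coord_perm[of "replicate N a" i b] differ_at_coord_perm[of "replicate N a" k b]
    by auto
qed

lemma coord_perm_permutes: "coord_perm permutes {..<N}"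
proof (rule bij_imp_permutes)
  have "coord_perm ` {..<N} \<subseteq> {..<N}"
    using coord_perm_less by auto
  then show "bij_betw coord_perm {..<N} {..<N}"
    using endo_inj_surj[of "{..<N}"] inj_on_coord_perm by (simp add: bij_betw_def)
qed (simp add: coord_perm_def)

lemma nth_image_update_other:
  assumes "length s = N" "i < N" "k < N" "k \<noteq> i"
  shows "T (s[k := y]) ! coord_perm i = T s ! coord_perm i"
proof (cases "y = s ! k")
  case False
  have "coord_perm i \<noteq> coord_perm k"
    using inj_on_coord_perm assms(2-4) by (auto dest: inj_onD)
  then show ?thesis
    using differ_atD(3)[OF differ_at_coord_perm[OF assms(1,3) False]] coord_perm_less[OF assms(2)]
    by simp
qed simp

lemma nth_image_coord_perm_cong:
  assumes s: "length s = N" and t: "length t = N" and i: "i < N" and "s ! i = t ! i"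
  shows "T s ! coord_perm i = T t ! coord_perm i"
proof -
  have "u[k := t ! k] ! i = s ! i \<and> T (u[k := t ! k]) ! coord_perm i = T s ! coord_perm i"
    if "length u = N" "k < N" "u ! i = s ! i \<and> T u ! coord_perm i = T s ! coord_perm i" for u k
  proof (cases "k = i")
    case True
    then have "u[k := t ! k] = u"
      using that(3) \<open>s ! i = t ! i\<close> by (metis list_update_id)
    then show ?thesis
      using that(3) by simp
  next
    case False
    then show ?thesis
      using that nth_image_update_other[OF that(1) i that(2)] by simp
  qed
  then show ?thesis
    using coordinatewise_induct[OF s t, of "\<lambda>u. u ! i = s ! i \<and> T u ! coord_perm i = T s ! coord_perm i"]
    by simp
qed

theorem ex_symbol_maps:
  "\<exists>\<sigma>. (\<forall>i<N. inj (\<sigma> i)) \<and> (\<forall>s. length s = N \<longrightarrow> (\<forall>i<N. T s ! coord_perm i = \<sigma> i (s ! i)))"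
proof (intro exI conjI allI impI)
  define \<sigma> where "\<sigma> i a = T (replicate N a) ! coord_perm i" for i a
  show "T s ! coord_perm i = \<sigma> i (s ! i)" if "length s = N" "i < N" for s i
    using nth_image_coord_perm_cong[of s "replicate N (s ! i)"] that by (simp add: \<sigma>_def)
  show "inj (\<sigma> i)" if "i < N" for i
  proof (rule injI, rule ccontr)
    fix a b
    assume "\<sigma> i a = \<sigma> i b" "a \<noteq> b"
    moreover have "T ((replicate N a)[i := b]) ! coord_perm i = \<sigma> i b"
      using nth_image_coord_perm_cong[of "(replicate N a)[i := b]" "replicate N b"] \<open>i < N\<close>
      by (simp add: \<sigma>_def)
    ultimately show False
      using differ_atD(2)[OF differ_at_coord_perm[of "replicate N a" i b]] \<open>i < N\<close>
      by (simp add: \<sigma>_def)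
  qed
qed

end

section \<open>Maps preserving product states\<close>

locale product_state_preserving =
  fixes N :: nat and T :: "ont list \<Rightarrow> ont list"
  assumes length_T: "length s = N \<Longrightarrow> length (T s) = N"
    and product_state_image:
      "product_state N (singleton_partition N) B \<Longrightarrow> product_state N (singleton_partition N) (T ` B)"
begin

text \<open>A box with two symbols per coordinate has the minimal size \<open>2 ^ N\<close> of a product state, and
  its image is a product state too; hence \<open>T\<close> is injective on it.\<close>

lemma inj_on_T: "inj_on T {s. length s = N}"
proof (rule inj_onI)
  fix s t
  assume "s \<in> {s. length s = N}" "t \<in> {s. length s = N}" "T s = T t"
  then obtain S where S: "\<forall>i<N. card (S i) = 2" "s \<in> box N S" "t \<in> box N S"
    using card_2_box_through[of s N t s] by auto
  have "2 ^ N \<le> card (T ` box N S)"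
    using two_pow_le_card_product_state product_state_image product_state_box_card_2[OF S(1)] by blast
  moreover have "card (box N S) = 2 ^ N"
    using S(1) by (simp add: card_box)
  ultimately have "inj_on T (box N S)"
    using card_image_le[OF finite_box] eq_card_imp_inj_on[OF finite_box] by (metis le_antisym)
  then show "s = t"
    using S(2,3) \<open>T s = T t\<close> by (auto dest: inj_onD)
qed

lemma image_lists: "T ` {s. length s = N} = {s. length s = N}"
  using endo_inj_surj[OF finite_ont_lists _ inj_on_T] length_T by auto

lemma product_state_lists: "product_state N (singleton_partition N) B \<Longrightarrow> B \<subseteq> {s. length s = N}"
  by (auto simp: product_state_singleton_partition_iff box_def)

lemma image_product_states:
  "image T ` {B. product_state N (singleton_partition N) B} = {B. product_state N (singleton_partition N) B}"
proof (rule endo_inj_surj)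
  show "finite {B. product_state N (singleton_partition N) B}"
    using finite_ont_lists product_state_lists
    by (auto intro: finite_subset[of _ "Pow {s. length s = N}"])
  show "inj_on (image T) {B. product_state N (singleton_partition N) B}"
    using inj_on_T product_state_lists by (auto intro!: inj_onI simp: inj_on_image_eq_iff)
qed (use product_state_image in auto)

lemma between_T_iff:
  assumes "length s = N" "length t = N" "length u = N"
  shows "between N (T s) (T t) (T u) \<longleftrightarrow> between N s t u"
proof -
  let ?P = "{B. product_state N (singleton_partition N) B}"
  have mem: "T x \<in> T ` B \<longleftrightarrow> x \<in> B" if "B \<in> ?P" "length x = N" for x B
    using inj_on_image_mem_iff[OF inj_on_T] product_state_lists that by auto
  have "between N (T s) (T t) (T u) \<longleftrightarrow> (\<forall>B\<in>?P. T s \<in> B \<longrightarrow> T t \<in> B \<longrightarrow> T u \<in> B)"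
    using between_iff_product_states[of "T s" N "T t" "T u"] length_T assms by simp
  also have "\<dots> \<longleftrightarrow> (\<forall>B\<in>image T ` ?P. T s \<in> B \<longrightarrow> T t \<in> B \<longrightarrow> T u \<in> B)"
    unfolding image_product_states ..
  also have "\<dots> \<longleftrightarrow> (\<forall>B\<in>?P. s \<in> B \<longrightarrow> t \<in> B \<longrightarrow> u \<in> B)"
    using mem assms by blast
  also have "\<dots> \<longleftrightarrow> between N s t u"
    using between_iff_product_states[of s N t u] assms by simp
  finally show ?thesis .
qed

lemma hamming_adj_T_iff:
  assumes s: "length s = N" and t: "length t = N"
  shows "hamming_adj N (T s) (T t) \<longleftrightarrow> hamming_adj N s t"
proof -
  have T_eq_iff: "T u = T v \<longleftrightarrow> u = v" if "length u = N" "length v = N" for u v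
    using inj_on_eq_iff[OF inj_on_T] that by simp
  have "(\<forall>v. length v = N \<longrightarrow> between N (T s) (T t) v \<longrightarrow> v = T s \<or> v = T t)
    \<longleftrightarrow> (\<forall>u. length u = N \<longrightarrow> between N (T s) (T t) (T u) \<longrightarrow> T u = T s \<or> T u = T t)"
    (is "?L \<longleftrightarrow> ?R")
  proof
    assume ?L
    then show ?R
      using length_T by simp
  next
    assume ?R
    show ?L
    proof (intro allI impI)
      fix v
      assume v: "length v = N" "between N (T s) (T t) v"
      then have "v \<in> T ` {s. length s = N}"
        using image_lists by simp
      then show "v = T s \<or> v = T t"
        using \<open>?R\<close> v(2) by blast
    qed
  qed
  also have "\<dots> \<longleftrightarrow> (\<forall>u. length u = N \<longrightarrow> between N s t u \<longrightarrow> u = s \<or> u = t)"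
    by (simp add: between_T_iff[OF s t] T_eq_iff[OF _ s] T_eq_iff[OF _ t])
  finally show ?thesis
    using hamming_adj_iff_between[of "T s" N "T t"] hamming_adj_iff_between[OF s t] length_T s t
      T_eq_iff[OF s t] by simp
qed

sublocale hamming_automorphism N T
proof
  show "\<exists>a b :: ont. a \<noteq> b"
    by blast
qed (simp_all add: length_T inj_on_T hamming_adj_T_iff)

end

section \<open>Compositions of local permutations and system swaps\<close>

lemma local_swap_comps_comp:
  assumes "f \<in> local_swap_comps N" "g \<in> local_swap_comps N"
  shows "f \<circ> g \<in> local_swap_comps N"
  using assms(1)
proof (induction f rule: local_swap_comps.induct)
  case id
  then show ?case
    using assms(2) by simp
next
  case (loc f i \<sigma>)
  then show ?case
    using local_swap_comps.loc by (metis comp_assoc)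
next
  case (swp f i j)
  then show ?case
    using local_swap_comps.swp by (metis comp_assoc)
qed

lemma local_swap_comps_local_perms:
  assumes "\<forall>i<N. bij (\<sigma> i)"
  shows "\<exists>f\<in>local_swap_comps N. \<forall>s. length s = N \<longrightarrow> f s = map (\<lambda>i. \<sigma> i (s ! i)) [0..<N]"
proof -
  have "\<exists>f\<in>local_swap_comps N. \<forall>s. f s = map (\<lambda>i. if i < k then \<sigma> i (s ! i) else s ! i) [0..<length s]"
    if "k \<le> N" for k
    using that
  proof (induction k)
    case 0
    then show ?case
      using local_swap_comps.id by (intro bexI[of _ id]) (auto simp: map_nth)
  next
    case (Suc k)
    then obtain f where f: "f \<in> local_swap_comps N"
      and f_eq: "\<forall>s. f s = map (\<lambda>i. if i < k then \<sigma> i (s ! i) else s ! i) [0..<length s]"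
      by auto
    have "local_perm k (\<sigma> k) \<circ> f \<in> local_swap_comps N"
      using f Suc.prems assms by (intro local_swap_comps.loc) auto
    moreover have "local_perm k (\<sigma> k) (f s)
        = map (\<lambda>i. if i < Suc k then \<sigma> i (s ! i) else s ! i) [0..<length s]" for s
      by (rule nth_equalityI) (simp_all add: f_eq local_perm_def nth_list_update less_Suc_eq)
    ultimately show ?case
      by (intro bexI[of _ "local_perm k (\<sigma> k) \<circ> f"]) auto
  qed
  then obtain f where "f \<in> local_swap_comps N"
    and "\<forall>s. f s = map (\<lambda>i. if i < N then \<sigma> i (s ! i) else s ! i) [0..<length s]"
    by blast
  then show ?thesis
    by (intro bexI[of _ f]) auto
qed

lemma sys_swap_nth:
  "i < length s \<Longrightarrow> j < length s \<Longrightarrow> k < length s \<Longrightarrow> sys_swap i j s ! k = s ! Transposition.transpose i j k"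
  by (auto simp: sys_swap_def nth_list_update transpose_def)

lemma local_swap_comps_permute:
  assumes "p permutes {..<N}"
  shows "\<exists>f\<in>local_swap_comps N. \<forall>s. length s = N \<longrightarrow> length (f s) = N \<and> (\<forall>i<N. f s ! p i = s ! i)"
  using assms finite_lessThan
proof (induction p rule: permutes_induct)
  case id
  show ?case
    using local_swap_comps.id by (intro bexI[of _ id]) auto
next
  case (swap a b p)
  then obtain f where f: "f \<in> local_swap_comps N"
    and f_nth: "\<forall>s. length s = N \<longrightarrow> length (f s) = N \<and> (\<forall>i<N. f s ! p i = s ! i)"
    by blast
  have "sys_swap a b \<circ> f \<in> local_swap_comps N"
    using f swap.hyps by (intro local_swap_comps.swp) auto
  moreover have "sys_swap a b (f s) ! Transposition.transpose a b (p i) = s ! i"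
    if "length s = N" "i < N" for s i
  proof -
    have "p i < N"
      using permutes_in_image[OF \<open>p permutes {..<N}\<close>] \<open>i < N\<close> by simp
    then have "Transposition.transpose a b (p i) < N"
      using swap.hyps by (simp add: transpose_def)
    then show ?thesis
      using f_nth that swap.hyps by (simp add: sys_swap_nth)
  qed
  ultimately show ?case
    using f_nth by (intro bexI[of _ "sys_swap a b \<circ> f"]) (auto simp: sys_swap_def)
qed

lemma local_swap_comps_coordinatewise:
  assumes "p permutes {..<N}" "\<forall>i<N. bij (\<sigma> i)"
  shows "\<exists>f\<in>local_swap_comps N. \<forall>s. length s = N \<longrightarrow> length (f s) = N \<and> (\<forall>i<N. f s ! p i = \<sigma> i (s ! i))"
proof -
  obtain g where g: "g \<in> local_swap_comps N" "\<forall>s. length s = N \<longrightarrow> g s = map (\<lambda>i. \<sigma> i (s ! i)) [0..<N]"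
    using local_swap_comps_local_perms[OF assms(2)] by blast
  obtain h where h: "h \<in> local_swap_comps N"
    "\<forall>s. length s = N \<longrightarrow> length (h s) = N \<and> (\<forall>i<N. h s ! p i = s ! i)"
    using local_swap_comps_permute[OF assms(1)] by blast
  show ?thesis
    using g h local_swap_comps_comp[OF h(1) g(1)] by (intro bexI[of _ "h \<circ> g"]) auto
qed

lemma permutes_nth_equalityI:
  assumes "p permutes {..<N}" "length xs = N" "length ys = N" "\<forall>i<N. xs ! p i = ys ! p i"
  shows "xs = ys"
proof (rule nth_equalityI)
  fix j
  assume "j < length xs"
  then have "inv p j < N" "p (inv p j) = j"
    using permutes_in_image[OF permutes_inv[OF assms(1)]] permutes_inverses(1)[OF assms(1)] assms(2)
    by auto
  then show "xs ! j = ys ! j"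
    using assms(4) by metis
qed (simp add: assms)

theorem mainTheorem10:
  fixes N :: nat and T :: "ont list \<Rightarrow> ont list"
  assumes "valid_transformation N T"
    and "non_entangling N T"
  shows "\<exists>f \<in> local_swap_comps N. \<forall>s \<in> ostates N. T s = f s"
proof -
  interpret product_state_preserving N T
  proof
    show "length (T s) = N" if "length s = N" for s
      using assms(1) that by (auto simp: valid_transformation_def image_subset_iff)
    show "product_state N (singleton_partition N) (T ` B)" if "product_state N (singleton_partition N) B" for B
      using assms(2) partition_on_singleton_partition that by (auto simp: non_entangling_def)
  qed
  obtain \<sigma> where "\<forall>i<N. inj (\<sigma> i)"
    and T_nth: "\<forall>s. length s = N \<longrightarrow> (\<forall>i<N. T s ! coord_perm i = \<sigma> i (s ! i))"
    using ex_symbol_maps by blast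
  then have "\<forall>i<N. bij (\<sigma> i)"
    using finite_UNIV_inj_surj[OF finite_UNIV_ont] by (auto simp: bij_def)
  then obtain f where "f \<in> local_swap_comps N"
    and f_nth: "\<forall>s. length s = N \<longrightarrow> length (f s) = N \<and> (\<forall>i<N. f s ! coord_perm i = \<sigma> i (s ! i))"
    using local_swap_comps_coordinatewise[OF coord_perm_permutes] by blast
  moreover have "T s = f s" if "length s = N" for s
    using permutes_nth_equalityI[OF coord_perm_permutes, of "T s" "f s"] length_T T_nth f_nth that
    by simp
  ultimately show ?thesis
    by auto
qed

end
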